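(* For every integer $b\geq 1$, $$\sum_{n\geq 1}\frac{H_n}{(2n+1)^{4b-1}}=-2\lambda(4b-1)\ln 2+\Big(2b-\frac12\Big)\lambda(4b)-2\sum_{q=1}^{b-1}\lambda(2q+1)\lambda(4b-2q-1),$$ where an empty sum equals $0$.
   Context: $H_n=1+\frac12+\cdots+\frac1n$ is the $n$-th harmonic number. For real $s>1$, $\lambda(s)=\sum_{n\geq 1}\frac{1}{(2n-1)^s}=(1-2^{-s})\zeta(s)$. *)

theory Defs
  imports "HOL-Analysis.Analysis"
begin

definition dirichlet_lambda :: "real \<Rightarrow> real" where
  "dirichlet_lambda s = (\<Sum>n. 1 / (2 * real n + 1) powr s)"

end

theory Submission
  imports Defs "HOL-Real_Asymp.Real_Asymp"
begin

(*
  Write o_n = 2n + 1. A product lambda(i) lambda(j) is the double series of 1 / (o_x^i o_y^j) over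
  all pairs (x, y). Summing such products along i + j = N, the diagonal x = y contributes a multiple
  of lambda(N), while off the diagonal the finite geometric sum over i splits as G(x, y) + G(y, x)
  with G(x, y) = k(x, y) / o_x^m. Summing G over y first telescopes to harmonic numbers: for
  k(x, y) = 1 / (o_y (o_y - o_x)) the row sum involves H_x and ln 2, which yields
    sum_n H_n / o_n^s = s lambda(s+1) - 2 ln 2 lambda(s) - sum_{i=2}^{s-1} lambda(i) lambda(s+1-i),
  and for k(x, y) = 1 / (o_y^2 - o_x^2) it is 1 / (4 o_x^2), which yields
    sum_{t=1}^{K-1} lambda(2t) lambda(2K-2t) = (K - 1/2) lambda(2K).
  For s = 4b - 1 the even-index products in the first formula are evaluated by the second, and the
  odd-index ones pair up under i -> s + 1 - i.
*)

section \<open>Unconditional sums over pairs\<close>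

lemma has_sum_sum:
  fixes f :: "'i \<Rightarrow> 'a \<Rightarrow> 'b::topological_comm_monoid_add"
  assumes "finite I" "\<And>i. i \<in> I \<Longrightarrow> (f i has_sum s i) A"
  shows "((\<lambda>x. \<Sum>i\<in>I. f i x) has_sum (\<Sum>i\<in>I. s i)) A"
  using assms by (induction I rule: finite_induct) (auto intro: has_sum_add)

lemma has_sum_diff:
  fixes f g :: "'a \<Rightarrow> 'b::topological_ab_group_add"
  assumes "(f has_sum a) A" "(g has_sum b) A"
  shows "((\<lambda>x. f x - g x) has_sum (a - b)) A"
proof -
  have "((\<lambda>x. - g x) has_sum - b) A"
    using assms(2) by (simp add: has_sum_uminus)
  from has_sum_add[OF assms(1) this] show ?thesis
    by simp
qed

lemma has_sum_product:
  fixes f :: "'a \<Rightarrow> real" and g :: "'b \<Rightarrow> real"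
  assumes f: "(f has_sum a) UNIV" and g: "(g has_sum b) UNIV"
    and "\<And>x. f x \<ge> 0" "\<And>y. g y \<ge> 0"
  shows "((\<lambda>(x, y). f x * g y) has_sum (a * b)) UNIV"
proof -
  have rows: "((\<lambda>y. f x * g y) has_sum f x * b) UNIV" for x
    using has_sum_cmult_right[OF g] .
  have cols: "((\<lambda>x. f x * b) has_sum a * b) UNIV"
    using has_sum_cmult_left[OF f] .
  have "(\<lambda>(x, y). f x * g y) summable_on UNIV \<times> UNIV"
    using rows cols assms(3,4) by (intro summable_on_SigmaI) (auto dest: has_sum_imp_summable)
  with rows cols have "((\<lambda>(x, y). f x * g y) has_sum (a * b)) (UNIV \<times> UNIV)"
    by (intro has_sum_SigmaI) auto
  then show ?thesis
    by simp
qed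

lemma summable_on_dominated_by_product:
  fixes h :: "'a \<times> 'b \<Rightarrow> real"
  assumes f: "f summable_on UNIV" and g: "g summable_on UNIV" and "\<And>x. f x \<ge> 0" "\<And>y. g y \<ge> 0"
    and bound: "\<And>x y. (x, y) \<in> A \<Longrightarrow> \<bar>h (x, y)\<bar> \<le> f x * g y"
  shows "h summable_on A"
proof -
  have "(\<lambda>(x, y). f x * g y) summable_on UNIV"
    by (rule has_sum_imp_summable, rule has_sum_product[OF has_sum_infsum[OF f] has_sum_infsum[OF g]])
      (use assms(3,4) in auto)
  then have "(\<lambda>(x, y). f x * g y) summable_on A"
    by (rule summable_on_subset) simp
  moreover have "norm (h z) \<le> (\<lambda>(x, y). f x * g y) z" if "z \<in> A" for z
    using bound that by (cases z) (simp only: real_norm_def case_prod_conv)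
  ultimately have "(\<lambda>z. norm (h z)) summable_on A"
    by (rule Infinite_Sum.abs_summable_on_comparison_test')
  then show ?thesis
    by (rule summable_on_iff_abs_summable_on_real[THEN iffD2])
qed

lemma has_sum_punctured_if_sums:
  fixes h :: "nat \<Rightarrow> real"
  assumes "h summable_on - {x}" "(\<lambda>y. if y = x then 0 else h y) sums v"
  shows "(h has_sum v) (- {x})"
proof -
  obtain w where w: "(h has_sum w) (- {x})"
    using assms(1) by (auto simp: summable_on_def)
  then have "((\<lambda>y. if y = x then 0 else h y) has_sum w) UNIV"
    by (rule has_sum_cong_neutral[THEN iffD2, rotated -1]) auto
  then have "v = w"
    using assms(2) has_sum_imp_sums sums_unique2 by blast
  with w show ?thesis
    by simp
qed

lemma has_sum_off_diagonal_rows: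
  fixes g F :: "'a \<times> 'a \<Rightarrow> real"
  assumes g: "(g has_sum T) UNIV"
    and diag: "((\<lambda>x. g (x, x)) has_sum D) UNIV"
    and split: "\<And>x y. x \<noteq> y \<Longrightarrow> g (x, y) = F (x, y) + F (y, x)"
    and F: "F summable_on {(x, y). x \<noteq> y}"
    and rows: "\<And>x. ((\<lambda>y. F (x, y)) has_sum r x) (- {x})"
  shows "(r has_sum (T - D) / 2) UNIV"
proof -
  define Off where "Off = {(x::'a, y). x \<noteq> y}"
  have "(g has_sum D) (range (\<lambda>x. (x, x)))"
    using diag by (subst has_sum_reindex) (auto intro: inj_onI simp: o_def)
  moreover have "UNIV - range (\<lambda>x. (x, x)) = Off"
    by (auto simp: Off_def)
  ultimately have g_off: "(g has_sum T - D) Off"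
    using has_sum_Diff[OF g] by fastforce
  obtain A where FA: "(F has_sum A) Off"
    using F by (auto simp: summable_on_def Off_def)
  have swap: "bij_betw prod.swap Off Off"
    by (rule bij_betwI[of _ _ _ prod.swap]) (auto simp: Off_def)
  have "((\<lambda>z. F z + F (prod.swap z)) has_sum A + A) Off"
    using FA has_sum_reindex_bij_betw[OF swap, of F A] by (intro has_sum_add) auto
  then have "(g has_sum A + A) Off"
    by (rule has_sum_cong[THEN iffD1, rotated]) (auto simp: Off_def split)
  with g_off have "T - D = A + A"
    by (rule has_sum_unique)
  moreover have "Off = (SIGMA x:UNIV. - {x})"
    by (auto simp: Off_def)
  then have "(F has_sum A) (SIGMA x:UNIV. - {x})"
    using FA by simp
  then have "(r has_sum A) UNIV"
    using rows by (rule has_sum_Sigma')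
  ultimately show ?thesis
    by simp
qed

section \<open>The odd numbers and the lambda series\<close>

definition odd_num :: "nat \<Rightarrow> real" where
  "odd_num n = 2 * real n + 1"

lemma odd_num_ge_1 [simp]: "1 \<le> odd_num n"
  by (simp add: odd_num_def)

lemma odd_num_pos [simp]: "0 < odd_num n"
  using odd_num_ge_1[of n] by linarith

lemma odd_num_nonneg [simp]: "0 \<le> odd_num n"
  using odd_num_pos[of n] by linarith

lemma odd_num_nonzero [simp]: "odd_num n \<noteq> 0"
  using odd_num_pos[of n] by linarith

lemma odd_num_diff: "odd_num m - odd_num n = 2 * (real m - real n)"
  by (simp add: odd_num_def)

lemma odd_num_eq_iff [simp]: "odd_num m = odd_num n \<longleftrightarrow> m = n"
  by (simp add: odd_num_def)

lemma summable_odd_num_powr: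
  assumes "a > 1"
  shows "summable (\<lambda>n. odd_num n powr - a)"
proof (rule summable_comparison_test')
  show "summable (\<lambda>n. real n powr - a)"
    using assms by (subst summable_real_powr_iff) auto
  show "norm (odd_num n powr - a) \<le> real n powr - a" if "n \<ge> 1" for n
    using that assms by (auto simp: odd_num_def intro!: powr_mono2')
qed

lemma dirichlet_lambda_sums:
  assumes "m \<ge> 2"
  shows "(\<lambda>n. 1 / odd_num n ^ m) sums dirichlet_lambda (real m)"
proof -
  have "summable (\<lambda>n. 1 / odd_num n ^ m)"
    using summable_odd_num_powr[of "real m"] assms
    by (simp add: powr_minus powr_realpow divide_inverse)
  moreover have "dirichlet_lambda (real m) = (\<Sum>n. 1 / odd_num n ^ m)"
    by (simp add: dirichlet_lambda_def odd_num_def powr_realpow add_pos_pos)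
  ultimately show ?thesis
    by (simp add: summable_sums)
qed

lemma dirichlet_lambda_has_sum:
  assumes "m \<ge> 2"
  shows "((\<lambda>n. 1 / odd_num n ^ m) has_sum dirichlet_lambda (real m)) UNIV"
  using dirichlet_lambda_sums[OF assms]
  by (intro norm_summable_imp_has_sum) (auto simp: power_abs abs_of_pos dest: sums_summable)

lemma abs_inverse_odd_num_square_gap_le:
  assumes "x \<noteq> y"
  shows "\<bar>1 / (odd_num y ^ 2 - odd_num x ^ 2)\<bar> \<le> 1 / (odd_num y * \<bar>odd_num y - odd_num x\<bar>)"
proof -
  have "odd_num y ^ 2 - odd_num x ^ 2 = (odd_num y - odd_num x) * (odd_num y + odd_num x)"
    by (simp add: power2_eq_square algebra_simps)
  moreover have "odd_num y * \<bar>odd_num y - odd_num x\<bar> \<le> (odd_num y + odd_num x) * \<bar>odd_num y - odd_num x\<bar>"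
    by (intro mult_right_mono) auto
  ultimately show ?thesis
    using assms by (simp add: abs_mult frac_le mult.commute)
qed

lemma summable_on_odd_num_three_halves:
  "(\<lambda>y. 1 / (odd_num y * sqrt (odd_num y))) summable_on UNIV"
proof -
  have "odd_num y powr - (3 / 2) = 1 / (odd_num y * sqrt (odd_num y))" for y
    by (simp add: powr_minus_divide powr_add [of _ 1 "1/2", simplified] powr_half_sqrt)
  then have "summable (\<lambda>y. 1 / (odd_num y * sqrt (odd_num y)))"
    using summable_odd_num_powr[of "3 / 2"] by simp
  then show ?thesis
    by (subst summable_on_UNIV_nonneg_real_iff) (auto intro: less_imp_le)
qed

lemma sqrt_odd_num_div_power_le:
  assumes "m \<ge> 2"
  shows "sqrt (odd_num x) / odd_num x ^ m \<le> 1 / (odd_num x * sqrt (odd_num x))"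
proof -
  have "odd_num x ^ 2 \<le> odd_num x ^ m"
    using assms by (intro power_increasing) auto
  then have "sqrt (odd_num x) / odd_num x ^ m \<le> sqrt (odd_num x) / odd_num x ^ 2"
    by (intro divide_left_mono) auto
  also have "\<dots> = 1 / (odd_num x * sqrt (odd_num x))"
    by (simp add: power2_eq_square field_simps)
  finally show ?thesis .
qed

(* The plain bound 1 / (2 o_y) is not summable in y; moving a factor sqrt o_y over to the
   x-side is what makes the off-diagonal double series absolutely convergent. *)
lemma inverse_odd_num_gap_le:
  assumes "x \<noteq> y"
  shows "1 / (odd_num y * \<bar>odd_num y - odd_num x\<bar>)
    \<le> 2 * sqrt (odd_num x) / (odd_num y * sqrt (odd_num y))"
proof -
  define p q where "p = odd_num y" and "q = odd_num x"
  have p: "p \<ge> 1" and q: "q \<ge> 1"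
    by (simp_all add: p_def q_def)
  have "\<bar>real y - real x\<bar> \<ge> 1"
    using assms by linarith
  then have gap: "\<bar>p - q\<bar> \<ge> 2"
    by (simp add: p_def q_def odd_num_diff abs_mult)
  have "sqrt p \<le> 2 * sqrt q * \<bar>p - q\<bar>"
  proof (cases "p \<le> 4 * q")
    case True
    then have "sqrt p \<le> 2 * sqrt q"
      using real_sqrt_le_mono[OF True] by (simp add: real_sqrt_mult)
    also have "\<dots> \<le> 2 * sqrt q * \<bar>p - q\<bar>"
      using gap q by simp
    finally show ?thesis .
  next
    case False
    have "sqrt p \<le> p"
      using p by (intro real_le_lsqrt) (auto simp: power2_eq_square)
    also have "\<dots> \<le> 2 * 1 * \<bar>p - q\<bar>"
      using False q by (auto simp: abs_if)
    also have "\<dots> \<le> 2 * sqrt q * \<bar>p - q\<bar>"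
      using q by (intro mult_right_mono) auto
    finally show ?thesis .
  qed
  then have "p * sqrt p \<le> p * (2 * sqrt q * \<bar>p - q\<bar>)"
    using p by (intro mult_left_mono) auto
  then show ?thesis
    using p gap by (simp add: p_def [symmetric] q_def [symmetric] field_simps)
qed

lemma summable_on_punctured_row:
  assumes "\<And>y. y \<noteq> x \<Longrightarrow> \<bar>k y\<bar> \<le> 1 / (odd_num y * \<bar>odd_num y - odd_num x\<bar>)"
  shows "k summable_on - {x}"
proof -
  have "(\<lambda>y. 2 * sqrt (odd_num x) * (1 / (odd_num y * sqrt (odd_num y)))) summable_on - {x}"
    by (intro summable_on_cmult_right summable_on_subset[OF summable_on_odd_num_three_halves]) auto
  moreover have "norm (k y) \<le> 2 * sqrt (odd_num x) * (1 / (odd_num y * sqrt (odd_num y)))"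
    if "y \<in> - {x}" for y
    using assms[of y] inverse_odd_num_gap_le[of x y] that by auto
  ultimately have "(\<lambda>y. norm (k y)) summable_on - {x}"
    by (rule Infinite_Sum.abs_summable_on_comparison_test')
  then show ?thesis
    by (rule summable_on_iff_abs_summable_on_real[THEN iffD2])
qed

lemma summable_on_off_diagonal:
  assumes "m \<ge> 2"
    and "\<And>x y. x \<noteq> y \<Longrightarrow> \<bar>k x y\<bar> \<le> 1 / (odd_num y * \<bar>odd_num y - odd_num x\<bar>)"
  shows "(\<lambda>(x, y). k x y / odd_num x ^ m) summable_on {(x, y). x \<noteq> y}"
proof (rule summable_on_dominated_by_product[where f = "\<lambda>x. 2 * (1 / (odd_num x * sqrt (odd_num x)))"
      and g = "\<lambda>y. 1 / (odd_num y * sqrt (odd_num y))"])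
  show "(\<lambda>x. 2 * (1 / (odd_num x * sqrt (odd_num x)))) summable_on UNIV"
    by (intro summable_on_cmult_right summable_on_odd_num_three_halves)
  fix x y :: nat
  assume "(x, y) \<in> {(x, y). x \<noteq> y}"
  then have "\<bar>k x y\<bar> / odd_num x ^ m
      \<le> 2 * sqrt (odd_num x) / (odd_num y * sqrt (odd_num y)) / odd_num x ^ m"
    using assms(2)[of x y] inverse_odd_num_gap_le[of x y] by (intro divide_right_mono) auto
  also have "\<dots> = 2 * (sqrt (odd_num x) / odd_num x ^ m) * (1 / (odd_num y * sqrt (odd_num y)))"
    by simp
  also have "\<dots> \<le> 2 * (1 / (odd_num x * sqrt (odd_num x))) * (1 / (odd_num y * sqrt (odd_num y)))"
    using sqrt_odd_num_div_power_le[OF assms(1)] by (intro mult_right_mono mult_left_mono) auto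
  finally show "\<bar>(\<lambda>(x, y). k x y / odd_num x ^ m) (x, y)\<bar>
    \<le> 2 * (1 / (odd_num x * sqrt (odd_num x))) * (1 / (odd_num y * sqrt (odd_num y)))"
    by simp
qed (use summable_on_odd_num_three_halves in auto)

section \<open>Finite geometric convolutions\<close>

lemma sum_inverse_power_convolution:
  fixes P Q :: "'a::field"
  assumes "P \<noteq> 0" "Q \<noteq> 0" "P \<noteq> Q"
  shows "(\<Sum>t=1..n. 1 / (P ^ t * Q ^ (n + 1 - t))) = (1 / P ^ n - 1 / Q ^ n) / (Q - P)"
proof (induction n)
  case (Suc n)
  have "(\<Sum>t=1..n. 1 / (P ^ t * Q ^ (Suc n + 1 - t))) = (\<Sum>t=1..n. 1 / (P ^ t * Q ^ (n + 1 - t)) / Q)"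
    by (rule sum.cong) (auto simp: Suc_diff_le field_simps)
  then have "(\<Sum>t=1..Suc n. 1 / (P ^ t * Q ^ (Suc n + 1 - t)))
      = (\<Sum>t=1..n. 1 / (P ^ t * Q ^ (n + 1 - t))) / Q + 1 / (P ^ Suc n * Q)"
    by (simp add: sum_divide_distrib)
  also have "\<dots> = (1 / P ^ n - 1 / Q ^ n) / (Q - P) / Q + 1 / (P ^ Suc n * Q)"
    by (simp only: Suc.IH)
  also have "\<dots> = (1 / P ^ Suc n - 1 / Q ^ Suc n) / (Q - P)"
  proof -
    have "Q - P \<noteq> 0"
      using assms(3) by auto
    then show ?thesis
      using assms(1,2) by (simp add: field_simps)
  qed
  finally show ?case .
qed simp

lemma sum_inverse_powers_gap_split:
  fixes p q :: real
  assumes "p \<noteq> 0" "q \<noteq> 0" "p \<noteq> q" "s \<ge> 3"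
  shows "(\<Sum>i=2..s-1. 1 / p ^ i * (1 / q ^ (s + 1 - i)))
    = 1 / (q * (q - p)) / p ^ (s - 1) + 1 / (p * (p - q)) / q ^ (s - 1)"
proof -
  have "{2..s-1} = {Suc 1..Suc (s - 2)}"
    using assms(4) by auto
  then have "(\<Sum>i=2..s-1. 1 / p ^ i * (1 / q ^ (s + 1 - i)))
      = (\<Sum>t=1..s-2. 1 / p ^ Suc t * (1 / q ^ (s + 1 - Suc t)))"
    by (simp only: sum.shift_bounds_cl_Suc_ivl)
  also have "\<dots> = (\<Sum>t=1..s-2. 1 / (p ^ t * q ^ (s - 2 + 1 - t))) / (p * q)"
    unfolding sum_divide_distrib
  proof (rule sum.cong)
    fix t
    assume "t \<in> {1..s-2}"
    then have "s + 1 - Suc t = Suc (s - 2 + 1 - t)"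
      by auto
    then show "1 / p ^ Suc t * (1 / q ^ (s + 1 - Suc t)) = 1 / (p ^ t * q ^ (s - 2 + 1 - t)) / (p * q)"
      using assms(1,2) by (simp add: field_simps)
  qed simp
  also have "\<dots> = (1 / p ^ (s - 2) - 1 / q ^ (s - 2)) / (q - p) / (p * q)"
    by (simp only: sum_inverse_power_convolution[OF assms(1-3)])
  also have "\<dots> = 1 / (q * (q - p)) / p ^ (s - 1) + 1 / (p * (p - q)) / q ^ (s - 1)"
  proof -
    have "s - 1 = Suc (s - 2)"
      using assms(4) by simp
    then have powers: "p ^ (s - 1) = p * p ^ (s - 2)" "q ^ (s - 1) = q * q ^ (s - 2)"
      by simp_all
    obtain d where d: "q - p = d"
      by simp
    then have "1 / (p * (p - q)) = - (1 / (p * d))"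
      by (metis minus_diff_eq mult_minus_right divide_minus_right)
    then show ?thesis
      by (simp only: powers d) (simp add: divide_inverse algebra_simps)
  qed
  finally show ?thesis .
qed

lemma sum_inverse_even_powers_square_gap_split:
  fixes p q :: real
  assumes "p \<noteq> 0" "q \<noteq> 0" "p ^ 2 \<noteq> q ^ 2" "K \<ge> 1"
  shows "(\<Sum>t=1..K-1. 1 / p ^ (2 * t) * (1 / q ^ (2 * K - 2 * t)))
    = 1 / (q ^ 2 - p ^ 2) / p ^ (2 * K - 2) + 1 / (p ^ 2 - q ^ 2) / q ^ (2 * K - 2)"
proof -
  obtain n where K: "K = Suc n"
    using assms(4) by (cases K) auto
  have "(\<Sum>t=1..n. 1 / p ^ (2 * t) * (1 / q ^ (2 * Suc n - 2 * t)))
      = (\<Sum>t=1..n. 1 / ((p ^ 2) ^ t * (q ^ 2) ^ (n + 1 - t)))"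
    by (intro sum.cong) (auto simp flip: power_mult simp: diff_mult_distrib2)
  also have "\<dots> = (1 / (p ^ 2) ^ n - 1 / (q ^ 2) ^ n) / (q ^ 2 - p ^ 2)"
    using assms(1-3) by (intro sum_inverse_power_convolution) auto
  also have "\<dots> = 1 / (q ^ 2 - p ^ 2) / p ^ (2 * n) + 1 / (p ^ 2 - q ^ 2) / q ^ (2 * n)"
  proof -
    have powers: "p ^ (2 * n) = (p ^ 2) ^ n" "q ^ (2 * n) = (q ^ 2) ^ n"
      by (simp_all only: power_mult)
    have "1 / (p ^ 2 - q ^ 2) = - (1 / (q ^ 2 - p ^ 2))"
      by (metis minus_diff_eq divide_minus_right)
    then show ?thesis
      by (simp only: powers) (simp add: divide_inverse algebra_simps)
  qed
  finally show ?thesis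
    by (simp add: K)
qed

section \<open>Harmonic row sums\<close>

lemma sum_inverse_diff_lessThan:
  "N \<le> x \<Longrightarrow> (\<Sum>y<N. 1 / (real y - real x)) = harm (x - N) - (harm x :: real)"
proof (induction N)
  case (Suc N)
  then have "x - N = Suc (x - Suc N)"
    by simp
  then have "harm (x - N) = harm (x - Suc N) + (1 / (real x - real N) :: real)"
    using Suc.prems by (simp add: harm_Suc inverse_eq_divide)
  moreover have "1 / (real N - real x) = - (1 / (real x - real N))"
    by (simp add: divide_minus_right[symmetric])
  ultimately show ?case
    using Suc by simp
qed simp

lemma sum_inverse_diff_punctured:
  "(\<Sum>y<M + (x + 1). if y = x then 0 else 1 / (real y - real x)) = harm M - (harm x :: real)"
proof (induction M)
  case 0
  then show ?case
    using sum_inverse_diff_lessThan[of x x] by simp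
next
  case (Suc M)
  have "Suc M + (x + 1) = Suc (M + (x + 1))"
    by simp
  with Suc show ?case
    by (simp add: harm_Suc inverse_eq_divide)
qed

lemma sum_inverse_shifted:
  "(\<Sum>y<N. 1 / (real y + real x + 1)) = harm (N + x) - (harm x :: real)"
  by (induction N) (auto simp: harm_Suc inverse_eq_divide add_ac harm_expand(1))

lemma sum_inverse_odd_num: "(\<Sum>y<N. 1 / odd_num y) = harm (2 * N) - (harm N :: real) / 2"
proof (induction N)
  case (Suc N)
  define h :: real where "h = 1 / (real N + 1)"
  have "harm (2 * Suc N) = harm (2 * N) + 1 / odd_num N + h / 2"
    by (simp add: h_def harm_Suc inverse_eq_divide odd_num_def add_ac)
  moreover have "harm (Suc N) = harm N + h"
    by (simp add: h_def harm_Suc inverse_eq_divide add_ac)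
  moreover have "(\<Sum>y<Suc N. 1 / odd_num y) = harm (2 * N) - harm N / 2 + 1 / odd_num N"
    using Suc by simp
  ultimately show ?case
    by linarith
qed (simp add: harm_expand(1))

lemma harm_minus_ln_shift_LIMSEQ:
  "(\<lambda>M. harm (M + c) - ln (real (M + c)) :: real) \<longlonglongrightarrow> euler_mascheroni"
  using LIMSEQ_ignore_initial_segment[OF euler_mascheroni_LIMSEQ, of c] by simp

lemma harm_shift_diff_LIMSEQ: "(\<lambda>M. harm M - harm (M + c) :: real) \<longlonglongrightarrow> 0"
proof -
  have "(\<lambda>M. ln (real M) - ln (real (M + c))) \<longlonglongrightarrow> 0"
    by real_asymp
  then have "(\<lambda>M. (harm M - ln (real M)) - (harm (M + c) - ln (real (M + c)))
          + (ln (real M) - ln (real (M + c))) :: real) \<longlonglongrightarrow> euler_mascheroni - euler_mascheroni + 0"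
    by (intro tendsto_intros euler_mascheroni_LIMSEQ harm_minus_ln_shift_LIMSEQ)
  then show ?thesis
    by simp
qed

lemma harm_double_LIMSEQ:
  "(\<lambda>M. harm M / 2 + harm (M + c) / 2 - harm (2 * (M + c)) :: real) \<longlonglongrightarrow> - ln 2"
proof -
  have "strict_mono (\<lambda>M::nat. 2 * M + 2 * c)"
    by (auto simp: strict_mono_def)
  from LIMSEQ_subseq_LIMSEQ[OF euler_mascheroni_LIMSEQ this]
  have double: "(\<lambda>M. harm (2 * M + 2 * c) - ln (real (2 * M + 2 * c)) :: real) \<longlonglongrightarrow> euler_mascheroni"
    by (simp add: o_def)
  have "(\<lambda>M. ln (real M) / 2 + ln (real (M + c)) / 2 - ln (real (2 * M + 2 * c))) \<longlonglongrightarrow> - ln 2"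
    by real_asymp
  then have "(\<lambda>M. (harm M - ln (real M)) / 2 + (harm (M + c) - ln (real (M + c))) / 2
          - (harm (2 * M + 2 * c) - ln (real (2 * M + 2 * c)))
          + (ln (real M) / 2 + ln (real (M + c)) / 2 - ln (real (2 * M + 2 * c))) :: real)
        \<longlonglongrightarrow> euler_mascheroni / 2 + euler_mascheroni / 2 - euler_mascheroni + - ln 2"
    by (intro tendsto_intros euler_mascheroni_LIMSEQ double harm_minus_ln_shift_LIMSEQ) auto
  moreover have "(\<lambda>M. (harm M - ln (real M)) / 2 + (harm (M + c) - ln (real (M + c))) / 2
          - (harm (2 * M + 2 * c) - ln (real (2 * M + 2 * c)))
          + (ln (real M) / 2 + ln (real (M + c)) / 2 - ln (real (2 * M + 2 * c))) :: real)
        = (\<lambda>M. harm M / 2 + harm (M + c) / 2 - harm (2 * M + 2 * c))"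
    by (rule ext) (simp add: field_simps)
  ultimately show ?thesis
    by (simp add: algebra_simps)
qed

lemma inverse_odd_num_gap_partial_fractions:
  assumes "x \<noteq> y"
  shows "1 / (odd_num y * (odd_num y - odd_num x))
    = (1 / 2 * (1 / (real y - real x)) - 1 / odd_num y) / odd_num x"
proof -
  have "odd_num y - odd_num x \<noteq> 0"
    using assms by simp
  then have "1 / (odd_num y * (odd_num y - odd_num x))
      = (1 / (odd_num y - odd_num x) - 1 / odd_num y) / odd_num x"
    by (simp add: field_simps)
  then show ?thesis
    by (simp add: odd_num_diff)
qed

lemma inverse_odd_num_square_gap_partial_fractions:
  assumes "x \<noteq> y"
  shows "1 / (odd_num y ^ 2 - odd_num x ^ 2)
    = (1 / (real y - real x) - 1 / (real y + real x + 1)) / (4 * odd_num x)"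
proof -
  define a b where "a = real y - real x" and "b = real y + real x + 1"
  have "a \<noteq> 0" "b \<noteq> 0" "odd_num x \<noteq> 0"
    using assms by (auto simp: a_def b_def)
  moreover have "odd_num y ^ 2 - odd_num x ^ 2 = 4 * a * b" "odd_num x = b - a"
    by (simp_all add: a_def b_def odd_num_def power2_eq_square algebra_simps)
  ultimately show ?thesis
    unfolding a_def [symmetric] b_def [symmetric] by (simp only:) (simp add: field_simps)
qed

lemma sums_inverse_odd_num_gap:
  "(\<lambda>y. if y = x then 0 else 1 / (odd_num y * (odd_num y - odd_num x)))
     sums ((1 / odd_num x - harm x / 2 - ln 2) / odd_num x)"
proof -
  define e where "e y = (if y = x then 0 else 1 / (odd_num y * (odd_num y - odd_num x)))" for y
  have partial_fractions: "e y = (1 / 2 * (if y = x then 0 else 1 / (real y - real x))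
      - 1 / odd_num y + (if y = x then 1 / odd_num x else 0)) / odd_num x" for y
    by (cases "y = x") (simp_all add: e_def inverse_odd_num_gap_partial_fractions)
  have partial_sums: "(\<Sum>y<M + (x + 1). e y) = ((harm M / 2 + harm (M + (x + 1)) / 2
      - harm (2 * (M + (x + 1)))) + (1 / odd_num x - harm x / 2)) / odd_num x" for M
  proof -
    have "(\<Sum>y<M + (x + 1). e y) = (1 / 2 * (\<Sum>y<M + (x + 1). if y = x then 0 else 1 / (real y - real x))
        - (\<Sum>y<M + (x + 1). 1 / odd_num y) + (\<Sum>y<M + (x + 1). if y = x then 1 / odd_num x else 0))
        / odd_num x"
      by (simp only: partial_fractions sum_divide_distrib[symmetric] sum.distrib sum_subtractf
          sum_distrib_left[symmetric])
    also have "\<dots> = (1 / 2 * (harm M - harm x) - (harm (2 * (M + (x + 1))) - harm (M + (x + 1)) / 2)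
        + 1 / odd_num x) / odd_num x"
      by (simp only: sum_inverse_diff_punctured sum_inverse_odd_num sum.delta) simp
    finally show ?thesis
      by (simp add: field_simps)
  qed
  have "(\<lambda>M. ((harm M / 2 + harm (M + (x + 1)) / 2 - harm (2 * (M + (x + 1))))
      + (1 / odd_num x - harm x / 2)) / odd_num x) \<longlonglongrightarrow> (- ln 2 + (1 / odd_num x - harm x / 2)) / odd_num x"
    by (intro tendsto_intros harm_double_LIMSEQ) simp
  then have "(\<lambda>M. \<Sum>y<M + (x + 1). e y) \<longlonglongrightarrow> (1 / odd_num x - harm x / 2 - ln 2) / odd_num x"
    by (simp only: partial_sums) (simp add: algebra_simps)
  then have "(\<lambda>N. \<Sum>y<N. e y) \<longlonglongrightarrow> (1 / odd_num x - harm x / 2 - ln 2) / odd_num x"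
    by (rule LIMSEQ_offset)
  then show ?thesis
    by (simp add: sums_def e_def)
qed

lemma sums_inverse_odd_num_square_gap:
  "(\<lambda>y. if y = x then 0 else 1 / (odd_num y ^ 2 - odd_num x ^ 2)) sums (1 / (4 * odd_num x ^ 2))"
proof -
  define e where "e y = (if y = x then 0 else 1 / (odd_num y ^ 2 - odd_num x ^ 2))" for y
  have partial_fractions: "e y = ((if y = x then 0 else 1 / (real y - real x))
      - 1 / (real y + real x + 1) + (if y = x then 1 / odd_num x else 0)) / (4 * odd_num x)" for y
  proof (cases "y = x")
    case False
    then show ?thesis
      by (simp add: e_def inverse_odd_num_square_gap_partial_fractions)
  qed (simp add: e_def odd_num_def)
  have partial_sums: "(\<Sum>y<M + (x + 1). e y)
      = (harm M - harm (M + (2 * x + 1)) + 1 / odd_num x) / (4 * odd_num x)" for M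
  proof -
    have "(\<Sum>y<M + (x + 1). e y) = ((\<Sum>y<M + (x + 1). if y = x then 0 else 1 / (real y - real x))
        - (\<Sum>y<M + (x + 1). 1 / (real y + real x + 1))
        + (\<Sum>y<M + (x + 1). if y = x then 1 / odd_num x else 0)) / (4 * odd_num x)"
      by (simp only: partial_fractions sum_divide_distrib[symmetric] sum.distrib sum_subtractf)
    also have "\<dots>
        = (harm M - harm x - (harm (M + (x + 1) + x) - harm x) + 1 / odd_num x) / (4 * odd_num x)"
      by (simp only: sum_inverse_diff_punctured sum_inverse_shifted sum.delta) simp
    also have "M + (x + 1) + x = M + (2 * x + 1)"
      by simp
    finally show ?thesis
      by simp
  qed
  have "(\<lambda>M. (harm M - harm (M + (2 * x + 1)) + 1 / odd_num x) / (4 * odd_num x))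
      \<longlonglongrightarrow> (0 + 1 / odd_num x) / (4 * odd_num x)"
    by (intro tendsto_intros harm_shift_diff_LIMSEQ) simp
  then have "(\<lambda>M. \<Sum>y<M + (x + 1). e y) \<longlonglongrightarrow> 1 / (4 * odd_num x ^ 2)"
    by (simp only: partial_sums) (simp add: power2_eq_square mult.commute mult.left_commute)
  then have "(\<lambda>N. \<Sum>y<N. e y) \<longlonglongrightarrow> 1 / (4 * odd_num x ^ 2)"
    by (rule LIMSEQ_offset)
  then show ?thesis
    by (simp add: sums_def e_def)
qed

section \<open>Convolutions of lambda values\<close>

lemma has_sum_dirichlet_lambda_convolution_rows:
  fixes I :: "'i set" and \<alpha> \<beta> :: "'i \<Rightarrow> nat" and k :: "nat \<Rightarrow> nat \<Rightarrow> real"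
  assumes "finite I"
    and exponents: "\<And>i. i \<in> I \<Longrightarrow> 2 \<le> \<alpha> i \<and> 2 \<le> \<beta> i \<and> \<alpha> i + \<beta> i = N"
    and "m \<ge> 2"
    and split: "\<And>x y. x \<noteq> y \<Longrightarrow> (\<Sum>i\<in>I. 1 / odd_num x ^ \<alpha> i * (1 / odd_num y ^ \<beta> i))
                                  = k x y / odd_num x ^ m + k y x / odd_num y ^ m"
    and bound: "\<And>x y. x \<noteq> y \<Longrightarrow> \<bar>k x y\<bar> \<le> 1 / (odd_num y * \<bar>odd_num y - odd_num x\<bar>)"
    and rows: "\<And>x. (\<lambda>y. if y = x then 0 else k x y) sums \<rho> x"
  shows "((\<lambda>x. \<rho> x / odd_num x ^ m) has_sum
           ((\<Sum>i\<in>I. dirichlet_lambda (real (\<alpha> i)) * dirichlet_lambda (real (\<beta> i)))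
            - real (card I) * dirichlet_lambda (real N)) / 2) UNIV"
proof -
  define g where "g = (\<lambda>z. \<Sum>i\<in>I. (\<lambda>(x, y). 1 / odd_num x ^ \<alpha> i * (1 / odd_num y ^ \<beta> i)) z)"
  show ?thesis
  proof (rule has_sum_off_diagonal_rows[where g = g and F = "\<lambda>(x, y). k x y / odd_num x ^ m"])
    show "(g has_sum (\<Sum>i\<in>I. dirichlet_lambda (real (\<alpha> i)) * dirichlet_lambda (real (\<beta> i)))) UNIV"
      unfolding g_def using \<open>finite I\<close>
    proof (rule has_sum_sum)
      show "((\<lambda>(x, y). 1 / odd_num x ^ \<alpha> i * (1 / odd_num y ^ \<beta> i))
          has_sum dirichlet_lambda (real (\<alpha> i)) * dirichlet_lambda (real (\<beta> i))) UNIV" if "i \<in> I" for i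
        using exponents[OF that] by (intro has_sum_product dirichlet_lambda_has_sum) auto
    qed
    have "g (x, x) = (\<Sum>i\<in>I. 1 / odd_num x ^ N)" for x
      unfolding g_def using exponents by (auto intro!: sum.cong simp: power_add [symmetric])
    moreover have "((\<lambda>x. \<Sum>i\<in>I. 1 / odd_num x ^ N) has_sum (\<Sum>i\<in>I. dirichlet_lambda (real N))) UNIV"
      using \<open>finite I\<close> exponents by (intro has_sum_sum dirichlet_lambda_has_sum) force+
    ultimately show "((\<lambda>x. g (x, x)) has_sum real (card I) * dirichlet_lambda (real N)) UNIV"
      by simp
    show "g (x, y) = (\<lambda>(x, y). k x y / odd_num x ^ m) (x, y) + (\<lambda>(x, y). k x y / odd_num x ^ m) (y, x)"
      if "x \<noteq> y" for x y
      using split[OF that] by (simp add: g_def)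
    show "(\<lambda>(x, y). k x y / odd_num x ^ m) summable_on {(x, y). x \<noteq> y}"
      using \<open>m \<ge> 2\<close> bound by (rule summable_on_off_diagonal)
    show "((\<lambda>y. (\<lambda>(x, y). k x y / odd_num x ^ m) (x, y)) has_sum \<rho> x / odd_num x ^ m) (- {x})" for x
    proof -
      have "(k x has_sum \<rho> x) (- {x})"
        using summable_on_punctured_row[of x "k x"] bound rows by (intro has_sum_punctured_if_sums) auto
      from has_sum_cmult_right[OF this, of "1 / odd_num x ^ m"] show ?thesis
        by simp
    qed
  qed
qed

lemma has_sum_harm_div_odd_num_power:
  assumes "s \<ge> 3"
  shows "((\<lambda>n. harm n / odd_num n ^ s) has_sum
           real s * dirichlet_lambda (real (s + 1)) - 2 * ln 2 * dirichlet_lambda (real s)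
           - (\<Sum>i=2..s-1. dirichlet_lambda (real i) * dirichlet_lambda (real (s + 1 - i)))) UNIV"
proof -
  define T where "T = (\<Sum>i=2..s-1. dirichlet_lambda (real i) * dirichlet_lambda (real (s + 1 - i)))"
  define \<rho> where "\<rho> x = (1 / odd_num x - harm x / 2 - ln 2) / odd_num x" for x
  have rows: "((\<lambda>x. \<rho> x / odd_num x ^ (s - 1)) has_sum
      (T - real (card {2..s-1}) * dirichlet_lambda (real (s + 1))) / 2) UNIV"
    unfolding T_def
  proof (rule has_sum_dirichlet_lambda_convolution_rows[where \<alpha> = "\<lambda>i. i" and \<beta> = "\<lambda>i. s + 1 - i"
        and k = "\<lambda>x y. 1 / (odd_num y * (odd_num y - odd_num x))"])
    show "(\<Sum>i\<in>{2..s-1}. 1 / odd_num x ^ i * (1 / odd_num y ^ (s + 1 - i)))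
        = 1 / (odd_num y * (odd_num y - odd_num x)) / odd_num x ^ (s - 1)
          + 1 / (odd_num x * (odd_num x - odd_num y)) / odd_num y ^ (s - 1)" if "x \<noteq> y" for x y
      using that assms by (intro sum_inverse_powers_gap_split) auto
    show "(\<lambda>y. if y = x then 0 else 1 / (odd_num y * (odd_num y - odd_num x))) sums \<rho> x" for x
      unfolding \<rho>_def by (rule sums_inverse_odd_num_gap)
  qed (use assms in \<open>auto simp: abs_mult\<close>)
  have diagonal: "((\<lambda>x. 1 / odd_num x ^ (s + 1) - ln 2 * (1 / odd_num x ^ s)) has_sum
      dirichlet_lambda (real (s + 1)) - ln 2 * dirichlet_lambda (real s)) UNIV"
    using assms by (intro has_sum_diff has_sum_cmult_right dirichlet_lambda_has_sum) auto
  have series: "((\<lambda>x. 2 * ((1 / odd_num x ^ (s + 1) - ln 2 * (1 / odd_num x ^ s))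
      - \<rho> x / odd_num x ^ (s - 1))) has_sum 2 * ((dirichlet_lambda (real (s + 1))
      - ln 2 * dirichlet_lambda (real s))
      - (T - real (card {2..s-1}) * dirichlet_lambda (real (s + 1))) / 2)) UNIV"
    by (rule has_sum_cmult_right[OF has_sum_diff[OF diagonal rows]])
  have summands: "(\<lambda>x. 2 * ((1 / odd_num x ^ (s + 1) - ln 2 * (1 / odd_num x ^ s))
      - \<rho> x / odd_num x ^ (s - 1)))
      = (\<lambda>x. harm x / odd_num x ^ s)"
  proof
    fix x
    have "s = Suc (s - 1)"
      using assms by simp
    then have "odd_num x ^ s = odd_num x ^ (s - 1) * odd_num x"
      by (metis power_Suc2)
    then show "2 * ((1 / odd_num x ^ (s + 1) - ln 2 * (1 / odd_num x ^ s)) - \<rho> x / odd_num x ^ (s - 1))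
        = harm x / odd_num x ^ s"
      by (simp add: \<rho>_def field_simps)
  qed
  have total: "2 * ((dirichlet_lambda (real (s + 1)) - ln 2 * dirichlet_lambda (real s))
      - (T - real (card {2..s-1}) * dirichlet_lambda (real (s + 1))) / 2)
      = real s * dirichlet_lambda (real (s + 1)) - 2 * ln 2 * dirichlet_lambda (real s) - T"
    using assms by (simp add: field_simps)
  from series show ?thesis
    unfolding summands total T_def [symmetric] .
qed

lemma dirichlet_lambda_even_convolution:
  assumes "K \<ge> 2"
  shows "(\<Sum>t=1..K-1. dirichlet_lambda (real (2 * t)) * dirichlet_lambda (real (2 * K - 2 * t)))
    = (real K - 1 / 2) * dirichlet_lambda (real (2 * K))"
proof -
  define T where
    "T = (\<Sum>t=1..K-1. dirichlet_lambda (real (2 * t)) * dirichlet_lambda (real (2 * K - 2 * t)))"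
  have rows: "((\<lambda>x. 1 / (4 * odd_num x ^ 2) / odd_num x ^ (2 * K - 2)) has_sum
      (T - real (card {1..K-1}) * dirichlet_lambda (real (2 * K))) / 2) UNIV"
    unfolding T_def
  proof (rule has_sum_dirichlet_lambda_convolution_rows[where \<alpha> = "\<lambda>t. 2 * t" and \<beta> = "\<lambda>t. 2 * K - 2 * t"
        and k = "\<lambda>x y. 1 / (odd_num y ^ 2 - odd_num x ^ 2)"])
    show "(\<Sum>t\<in>{1..K-1}. 1 / odd_num x ^ (2 * t) * (1 / odd_num y ^ (2 * K - 2 * t)))
        = 1 / (odd_num y ^ 2 - odd_num x ^ 2) / odd_num x ^ (2 * K - 2)
          + 1 / (odd_num x ^ 2 - odd_num y ^ 2) / odd_num y ^ (2 * K - 2)" if "x \<noteq> y" for x y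
      using that assms by (intro sum_inverse_even_powers_square_gap_split) auto
    show "\<bar>1 / (odd_num y ^ 2 - odd_num x ^ 2)\<bar> \<le> 1 / (odd_num y * \<bar>odd_num y - odd_num x\<bar>)"
      if "x \<noteq> y" for x y
      using that by (rule abs_inverse_odd_num_square_gap_le)
    show "(\<lambda>y. if y = x then 0 else 1 / (odd_num y ^ 2 - odd_num x ^ 2)) sums (1 / (4 * odd_num x ^ 2))"
      for x
      by (rule sums_inverse_odd_num_square_gap)
  qed (use assms in auto)
  have summands: "(\<lambda>x. 1 / (4 * odd_num x ^ 2) / odd_num x ^ (2 * K - 2))
      = (\<lambda>x. 1 / 4 * (1 / odd_num x ^ (2 * K)))"
  proof
    fix x
    have "2 * K = (2 * K - 2) + 2"
      using assms by simp
    then have "odd_num x ^ (2 * K) = odd_num x ^ (2 * K - 2) * odd_num x ^ 2"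
      by (metis power_add)
    then show "1 / (4 * odd_num x ^ 2) / odd_num x ^ (2 * K - 2) = 1 / 4 * (1 / odd_num x ^ (2 * K))"
      by simp
  qed
  have diagonal:
    "((\<lambda>x. 1 / 4 * (1 / odd_num x ^ (2 * K))) has_sum 1 / 4 * dirichlet_lambda (real (2 * K))) UNIV"
    using assms by (intro has_sum_cmult_right dirichlet_lambda_has_sum) auto
  have "(T - real (card {1..K-1}) * dirichlet_lambda (real (2 * K))) / 2
      = 1 / 4 * dirichlet_lambda (real (2 * K))"
    using rows diagonal unfolding summands by (rule has_sum_unique)
  then show ?thesis
    using assms by (simp add: T_def field_simps)
qed

lemma sum_even_odd_split:
  fixes f :: "nat \<Rightarrow> 'a::comm_monoid_add"
  shows "(\<Sum>i=2..2*(m+1). f i) = (\<Sum>k=1..m+1. f (2*k)) + (\<Sum>q=1..m. f (2*q+1))"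
proof (induction m)
  case (Suc m)
  have "2 * (Suc m + 1) = Suc (Suc (2*(m+1)))"
    by simp
  then have "(\<Sum>i=2..2*(Suc m+1). f i) = (\<Sum>i=2..2*(m+1). f i) + f (2*(m+1)+1) + f (2*(Suc m+1))"
    by simp
  with Suc show ?case
    by (simp add: ac_simps)
qed simp

lemma sum_reflect_halves:
  fixes g :: "nat \<Rightarrow> 'a::comm_monoid_add"
  shows "(\<Sum>q=1..2*n. g q) = (\<Sum>q=1..n. g q) + (\<Sum>q=1..n. g (2*n+1-q))"
proof -
  have "{1..2*n} = {1..n} \<union> {n+1..2*n}"
    by auto
  then have "(\<Sum>q=1..2*n. g q) = (\<Sum>q=1..n. g q) + (\<Sum>q=n+1..2*n. g q)"
    by (simp add: sum.union_disjoint)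
  also have "(\<Sum>q=n+1..2*n. g q) = (\<Sum>q=1..n. g (2*n+1-q))"
    by (rule sum.reindex_bij_witness[where i="\<lambda>q. 2*n+1-q" and j="\<lambda>q. 2*n+1-q"]) auto
  finally show ?thesis .
qed

lemma dirichlet_lambda_convolution_4b:
  assumes "b \<ge> 1"
  shows "(\<Sum>i=2..4*b-2. dirichlet_lambda (real i) * dirichlet_lambda (real (4*b - i)))
    = (2 * real b - 1 / 2) * dirichlet_lambda (real (4*b))
      + 2 * (\<Sum>q=1..b-1. dirichlet_lambda (real (2*q+1)) * dirichlet_lambda (real (4*b - 2*q - 1)))"
proof -
  define f where "f i = dirichlet_lambda (real i) * dirichlet_lambda (real (4*b - i))" for i
  have "4*b - 2 = 2 * (2*(b-1) + 1)"
    using assms by simp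
  then have "(\<Sum>i=2..4*b-2. f i) = (\<Sum>k=1..2*(b-1)+1. f (2*k)) + (\<Sum>q=1..2*(b-1). f (2*q+1))"
    by (simp only: sum_even_odd_split)
  also have "(\<Sum>k=1..2*(b-1)+1. f (2*k)) = (2 * real b - 1 / 2) * dirichlet_lambda (real (4*b))"
  proof -
    have "(\<Sum>k=1..2*(b-1)+1. f (2*k))
        = (\<Sum>t=1..2*b-1. dirichlet_lambda (real (2*t)) * dirichlet_lambda (real (2*(2*b) - 2*t)))"
      using assms by (intro sum.cong) (auto simp: f_def)
    also have "\<dots> = (real (2*b) - 1 / 2) * dirichlet_lambda (real (2*(2*b)))"
      using assms by (intro dirichlet_lambda_even_convolution) simp
    finally show ?thesis
      by simp
  qed
  also have "(\<Sum>q=1..2*(b-1). f (2*q+1))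
      = 2 * (\<Sum>q=1..b-1. dirichlet_lambda (real (2*q+1)) * dirichlet_lambda (real (4*b - 2*q - 1)))"
  proof -
    have "f (2 * (2*(b-1) + 1 - q) + 1) = f (2*q+1)" if "q \<in> {1..b-1}" for q
    proof -
      have "2 * (2*(b-1) + 1 - q) + 1 = 4*b - 2*q - 1" and "4*b - (4*b - 2*q - 1) = 2*q + 1"
        using that by auto
      then show ?thesis
        by (simp add: f_def)
    qed
    then have "(\<Sum>q=1..b-1. f (2 * (2*(b-1) + 1 - q) + 1)) = (\<Sum>q=1..b-1. f (2*q+1))"
      by (rule sum.cong[OF refl])
    moreover have "(\<Sum>q=1..2*(b-1). f (2*q+1))
        = (\<Sum>q=1..b-1. f (2*q+1)) + (\<Sum>q=1..b-1. f (2 * (2*(b-1) + 1 - q) + 1))"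
      by (rule sum_reflect_halves)
    ultimately show ?thesis
      by (simp add: f_def)
  qed
  finally show ?thesis
    by (simp add: f_def)
qed

theorem mainTheorem4:
  fixes b :: nat
  assumes "b \<ge> 1"
  shows "(\<lambda>n. harm (n + 1) / (2 * real (n + 1) + 1) ^ (4 * b - 1)) sums
           (- 2 * dirichlet_lambda (real (4 * b - 1)) * ln 2
            + (2 * real b - 1 / 2) * dirichlet_lambda (real (4 * b))
            - 2 * (\<Sum>q = 1..b - 1. dirichlet_lambda (real (2 * q + 1))
                                   * dirichlet_lambda (real (4 * b - 2 * q - 1))))"
proof -
  define s where "s = 4 * b - 1"
  define Q where
    "Q = (\<Sum>q=1..b-1. dirichlet_lambda (real (2*q+1)) * dirichlet_lambda (real (4*b - 2*q - 1)))"
  define X where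
    "X = - 2 * dirichlet_lambda (real s) * ln 2 + (2 * real b - 1 / 2) * dirichlet_lambda (real (4*b)) - 2 * Q"
  have s: "s \<ge> 3" "s + 1 = 4 * b" "s - 1 = 4 * b - 2" "real s = 4 * real b - 1"
    using assms by (auto simp: s_def)
  have "((\<lambda>n. harm n / odd_num n ^ s) has_sum X) UNIV"
    using has_sum_harm_div_odd_num_power[OF s(1)]
    unfolding s(2,3) dirichlet_lambda_convolution_4b[OF assms] s(4) Q_def [symmetric] X_def
    by (simp add: algebra_simps)
  then have "(\<lambda>n. harm (Suc n) / odd_num (Suc n) ^ s) sums X"
    by (subst sums_Suc_iff) (simp add: harm_expand(1) has_sum_imp_sums)
  then show ?thesis
    by (simp add: s_def odd_num_def X_def Q_def)
qed

end
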